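(* Let $\langle A;\cdot\rangle$ be a semigroup which is an Abelian algebra and satisfies condition $( * )$. Then: (1) the relations $X$ and $Y$ restricted to $A\cdot A$ are equivalence relations on $A\cdot A$; (2) for all idempotents $e,f\in A$ we have $\Phi_e\cap\Psi_f=\{ef\}$, and $ef$ is an idempotent; (3) for every $a\in A\cdot A$ there exist idempotents $e,f\in A$ such that $a\in X_e\cap Y_f$, and $X_e\cap Y_f=Z_{ef}$.
   Context: $A\cdot A=\{xy\mid x,y\in A\}$; an idempotent is $e$ with $ee=e$. Condition $( * )$: either ($bcA=bA$ and $Abc=Ac$ for all $b,c\in A$), or the set $A\cdot A$ is finite. Relations on $A$: $x\,\Phi\,y\iff\exists z\,(xz=yz)$; $x\,\Psi\,y\iff\exists z\,(zx=zy)$; $x\,X\,y\iff\exists z\,(zx=x\wedge zy=y\wedge z^2=z)$; $x\,Y\,y\iff\exists z\,(xz=x\wedge yz=y\wedge z^2=z)$; $x\,Z\,y\iff (x\,X\,y\wedge x\,Y\,y)$. For an equivalence (or relation) $\Theta$ and $a\in A\cdot A$, $\Theta_a$ denotes $\{x\in A\cdot A\mid x\,\Theta\,a\}$. A polynomial operation of an algebra is an operation obtained from a term by substituting elements of the algebra for some of its variables. An algebra is called Abelian if for every polynomial operation $t(x,y_1,\ldots,y_n)$ and all elements $u,v,c_1,\ldots,c_n,d_1,\ldots,d_n$ of the algebra, $t(u,c_1,\ldots,c_n)=t(u,d_1,\ldots,d_n)$ implies $t(v,c_1,\ldots,c_n)=t(v,d_1,\ldots,d_n)$. *)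

theory Defs
  imports Main
begin

definition sq :: "'a::semigroup_mult set" where
  "sq = {x * y | x y. True}"

definition idem :: "'a::semigroup_mult \<Rightarrow> bool" where
  "idem e \<longleftrightarrow> e * e = e"

definition condStar :: "'a::semigroup_mult itself \<Rightarrow> bool" where
  "condStar _ \<longleftrightarrow>
     (\<forall>b c::'a. {b * c * x | x. True} = {b * x | x. True}
              \<and> {x * (b * c) | x. True} = {x * c | x. True})
     \<or> finite (sq :: 'a set)"

text \<open>Terms of the semigroup signature with constants (polynomials).
  Variable 0 plays the role of x, the other variables the parameters y_i.\<close>
datatype 'a sterm = V nat | C 'a | M "'a sterm" "'a sterm"

primrec seval :: "'a sterm \<Rightarrow> (nat \<Rightarrow> 'a) \<Rightarrow> 'a::semigroup_mult" where
  "seval (V i) \<rho> = \<rho> i"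
| "seval (C a) \<rho> = a"
| "seval (M s t) \<rho> = seval s \<rho> * seval t \<rho>"

definition abelian_alg :: "'a::semigroup_mult itself \<Rightarrow> bool" where
  "abelian_alg _ \<longleftrightarrow>
     (\<forall>(t::'a sterm) (u::'a) v (c::nat \<Rightarrow> 'a) d.
        seval t (c(0 := u)) = seval t (d(0 := u)) \<longrightarrow>
        seval t (c(0 := v)) = seval t (d(0 := v)))"

definition relPhi :: "'a::semigroup_mult \<Rightarrow> 'a \<Rightarrow> bool" where
  "relPhi x y \<longleftrightarrow> (\<exists>z. x * z = y * z)"
definition relPsi :: "'a::semigroup_mult \<Rightarrow> 'a \<Rightarrow> bool" where
  "relPsi x y \<longleftrightarrow> (\<exists>z. z * x = z * y)"
definition relX :: "'a::semigroup_mult \<Rightarrow> 'a \<Rightarrow> bool" where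
  "relX x y \<longleftrightarrow> (\<exists>z. z * x = x \<and> z * y = y \<and> z * z = z)"
definition relY :: "'a::semigroup_mult \<Rightarrow> 'a \<Rightarrow> bool" where
  "relY x y \<longleftrightarrow> (\<exists>z. x * z = x \<and> y * z = y \<and> z * z = z)"
definition relZ :: "'a::semigroup_mult \<Rightarrow> 'a \<Rightarrow> bool" where
  "relZ x y \<longleftrightarrow> relX x y \<and> relY x y"

definition cls :: "('a::semigroup_mult \<Rightarrow> 'a \<Rightarrow> bool) \<Rightarrow> 'a \<Rightarrow> 'a set" where
  "cls R a = {x \<in> sq. R x a}"

definition restr :: "('a::semigroup_mult \<Rightarrow> 'a \<Rightarrow> bool) \<Rightarrow> ('a \<times> 'a) set" where
  "restr R = {(x, y). x \<in> sq \<and> y \<in> sq \<and> R x y}"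

end

theory Submission
  imports Defs
begin

text \<open>Being Abelian, applied to the polynomials \<open>y * x\<close> and \<open>x * y\<close>, says that an equation
  \<open>c u = d u\<close> (resp. \<open>u c = u d\<close>) for one \<open>u\<close> holds for all \<open>u\<close>.  Hence a local right unit
  \<open>g\<close> of \<open>a\<close> makes \<open>g g = g g g\<close>, i.e. gives an idempotent right unit \<open>g g\<close>, and likewise on
  the left.  Condition (*) provides local units for every element of \<open>A A\<close>: directly in its
  first form, and in the finite case because the powers of an element eventually repeat.\<close>

lemma abelian_mult_right_eq:
  assumes A: "abelian_alg TYPE('a::semigroup_mult)" and eq: "c * u = d * (u::'a)"
  shows "c * v = d * v"
proof -
  have "seval (M (V 1) (V 0)) ((\<lambda>_. c)(0 := u)) = seval (M (V 1) (V 0)) ((\<lambda>_. d)(0 := u))"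
    using eq by simp
  then have "seval (M (V 1) (V 0)) ((\<lambda>_. c)(0 := v)) = seval (M (V 1) (V 0)) ((\<lambda>_. d)(0 := v))"
    using A unfolding abelian_alg_def by blast
  then show ?thesis by simp
qed

lemma abelian_mult_left_eq:
  assumes A: "abelian_alg TYPE('a::semigroup_mult)" and eq: "u * c = u * (d::'a)"
  shows "v * c = v * d"
proof -
  have "seval (M (V 0) (V 1)) ((\<lambda>_. c)(0 := u)) = seval (M (V 0) (V 1)) ((\<lambda>_. d)(0 := u))"
    using eq by simp
  then have "seval (M (V 0) (V 1)) ((\<lambda>_. c)(0 := v)) = seval (M (V 0) (V 1)) ((\<lambda>_. d)(0 := v))"
    using A unfolding abelian_alg_def by blast
  then show ?thesis by simp
qed

lemma abelian_idem_right_unit: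
  assumes A: "abelian_alg TYPE('a::semigroup_mult)" and g: "a * g = (a::'a)"
  shows "\<exists>e. idem e \<and> a * e = a"
proof -
  have "a * g = a * (g * g)" using g by (metis mult.assoc)
  then have "g * g = g * (g * g)" using abelian_mult_left_eq[OF A] by blast
  then have "idem (g * g)" unfolding idem_def by (metis mult.assoc)
  moreover have "a * (g * g) = a" using g by (metis mult.assoc)
  ultimately show ?thesis by blast
qed

lemma abelian_idem_left_unit:
  assumes A: "abelian_alg TYPE('a::semigroup_mult)" and g: "g * a = (a::'a)"
  shows "\<exists>e. idem e \<and> e * a = a"
proof -
  have "g * a = (g * g) * a" using g by (metis mult.assoc)
  then have "g * g = (g * g) * g" using abelian_mult_right_eq[OF A] by blast
  then have "idem (g * g)" unfolding idem_def by (metis mult.assoc)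
  moreover have "(g * g) * a = a" using g by (metis mult.assoc)
  ultimately show ?thesis by blast
qed

lemma idem_mult_idem:
  assumes A: "abelian_alg TYPE('a::semigroup_mult)" and "idem e" "idem (f::'a)"
  shows "idem (e * f)"
proof -
  have ee: "e * e = e" and ff: "f * f = f" using assms(2,3) unfolding idem_def by auto
  have "(e * f) * f = e * f" using ff by (metis mult.assoc)
  then have "(e * f) * (e * f) = e * (e * f)"
    using abelian_mult_right_eq[OF A, of "e * f" f e] by simp
  then show ?thesis using ee unfolding idem_def by (metis mult.assoc)
qed

text \<open>Without a unit there is no zeroth power: \<open>spow c n\<close> is \<open>c\<^sup>n\<^sup>+\<^sup>1\<close>.\<close>

primrec spow :: "'a::semigroup_mult \<Rightarrow> nat \<Rightarrow> 'a" where
  "spow c 0 = c"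
| "spow c (Suc n) = spow c n * c"

lemma spow_add: "spow c (m + n + 1) = spow c m * spow c n"
  by (induction n) (simp_all add: mult.assoc)

lemma spow_Suc_left: "spow c (Suc n) = c * spow c n"
  using spow_add[of c 0 n] by simp

lemma finite_sq_spow_repeats:
  assumes "finite (sq :: 'a::semigroup_mult set)"
  shows "\<exists>i p. spow (c::'a) (Suc i) = spow c (Suc (i + p + 1))"
proof -
  let ?f = "\<lambda>n. spow c (Suc n)"
  have "range ?f \<subseteq> sq" unfolding sq_def by auto
  then have "finite (range ?f)" using assms finite_subset by blast
  then have "\<not> inj ?f" using finite_imageD by fastforce
  then obtain i j where "i < j" "?f i = ?f j"
    unfolding inj_def by (metis linorder_neqE_nat)
  moreover from \<open>i < j\<close> have "j = i + (j - i - 1) + 1" by simp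
  ultimately show ?thesis by metis
qed

lemma sq_has_right_unit:
  assumes A: "abelian_alg TYPE('a::semigroup_mult)" and S: "condStar TYPE('a)"
    and "(a::'a) \<in> sq"
  shows "\<exists>g. a * g = a"
proof -
  obtain b c where a: "a = b * c" using \<open>a \<in> sq\<close> unfolding sq_def by blast
  show ?thesis
  proof (cases "finite (sq :: 'a set)")
    case True
    then obtain i p where rep: "spow c (Suc i) = spow c (Suc (i + p + 1))"
      using finite_sq_spow_repeats by blast
    have "spow c i * c = spow c i * (c * spow c p)"
      using rep spow_add[of c i "Suc p"] spow_Suc_left[of c p] by simp
    then have "b * c = b * (c * spow c p)" by (rule abelian_mult_left_eq[OF A])
    then show ?thesis using a by (metis mult.assoc)
  next
    case False
    then have "{b * c * x | x. True} = {b * x | x. True}"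
      using S unfolding condStar_def by blast
    then obtain x where "b * c = b * c * x" by blast
    then show ?thesis using a by metis
  qed
qed

lemma sq_has_left_unit:
  assumes A: "abelian_alg TYPE('a::semigroup_mult)" and S: "condStar TYPE('a)"
    and "(a::'a) \<in> sq"
  shows "\<exists>g. g * a = a"
proof -
  obtain b c where a: "a = b * c" using \<open>a \<in> sq\<close> unfolding sq_def by blast
  show ?thesis
  proof (cases "finite (sq :: 'a set)")
    case True
    then obtain i p where rep: "spow b (Suc i) = spow b (Suc (i + p + 1))"
      using finite_sq_spow_repeats by blast
    have idx: "Suc (i + p + 1) = Suc p + i + 1" by simp
    have "b * spow b i = spow b (Suc i)" by (simp only: spow_Suc_left)
    also have "\<dots> = spow b (Suc p + i + 1)" by (metis rep idx)
    also have "\<dots> = (spow b p * b) * spow b i" by (simp only: spow_add spow.simps)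
    finally have "b * c = (spow b p * b) * c" by (rule abelian_mult_right_eq[OF A])
    then show ?thesis using a by (metis mult.assoc)
  next
    case False
    then have "{x * (b * c) | x. True} = {x * c | x. True}"
      using S unfolding condStar_def by blast
    then obtain x where "b * c = x * (b * c)" by blast
    then show ?thesis using a by metis
  qed
qed

lemma equiv_restr_relX:
  assumes A: "abelian_alg TYPE('a::semigroup_mult)"
    and units: "\<And>a::'a. a \<in> sq \<Longrightarrow> \<exists>g. g * a = a"
  shows "equiv (sq :: 'a set) (restr relX)"
proof (rule equivI)
  show "restr relX \<subseteq> (sq :: 'a set) \<times> sq" unfolding restr_def by blast
  show "refl_on (sq :: 'a set) (restr relX)"
  proof (rule refl_onI)
    fix x :: 'a assume "x \<in> sq"
    then obtain e where "idem e" "e * x = x" using units abelian_idem_left_unit[OF A] by blast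
    then show "(x, x) \<in> restr relX"
      using \<open>x \<in> sq\<close> unfolding idem_def restr_def relX_def by auto
  qed
  show "sym (restr (relX :: 'a \<Rightarrow> 'a \<Rightarrow> bool))" unfolding sym_def restr_def relX_def by blast
  have "z * w = w" if "z * y = y" "z' * y = y" "z' * w = w" for z z' y w :: 'a
    using that abelian_mult_right_eq[OF A, of z y z' w] by simp
  then show "trans (restr (relX :: 'a \<Rightarrow> 'a \<Rightarrow> bool))"
    unfolding trans_def restr_def relX_def by blast
qed

lemma equiv_restr_relY:
  assumes A: "abelian_alg TYPE('a::semigroup_mult)"
    and units: "\<And>a::'a. a \<in> sq \<Longrightarrow> \<exists>g. a * g = a"
  shows "equiv (sq :: 'a set) (restr relY)"
proof (rule equivI)
  show "restr relY \<subseteq> (sq :: 'a set) \<times> sq" unfolding restr_def by blast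
  show "refl_on (sq :: 'a set) (restr relY)"
  proof (rule refl_onI)
    fix x :: 'a assume "x \<in> sq"
    then obtain e where "idem e" "x * e = x" using units abelian_idem_right_unit[OF A] by blast
    then show "(x, x) \<in> restr relY"
      using \<open>x \<in> sq\<close> unfolding idem_def restr_def relY_def by auto
  qed
  show "sym (restr (relY :: 'a \<Rightarrow> 'a \<Rightarrow> bool))" unfolding sym_def restr_def relY_def by blast
  have "w * z = w" if "y * z = y" "y * z' = y" "w * z' = w" for z z' y w :: 'a
    using that abelian_mult_left_eq[OF A, of y z z' w] by simp
  then show "trans (restr (relY :: 'a \<Rightarrow> 'a \<Rightarrow> bool))"
    unfolding trans_def restr_def relY_def by blast
qed

lemma cls_relPhi_inter_cls_relPsi:
  assumes A: "abelian_alg TYPE('a::semigroup_mult)"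
    and units: "\<And>a::'a. a \<in> sq \<Longrightarrow> \<exists>g. a * g = a"
    and "idem e" "idem (f::'a)"
  shows "cls relPhi e \<inter> cls relPsi f = {e * f}"
proof
  have ee: "e * e = e" and ff: "f * f = f" using assms(3,4) unfolding idem_def by auto
  show "cls relPhi e \<inter> cls relPsi f \<subseteq> {e * f}"
  proof
    fix x assume "x \<in> cls relPhi e \<inter> cls relPsi f"
    then obtain z z' where "x \<in> sq" "x * z = e * z" "z' * x = z' * f"
      unfolding cls_def relPhi_def relPsi_def by auto
    then have Phi: "x * v = e * v" and Psi: "v * x = v * f" for v
      using abelian_mult_right_eq[OF A] abelian_mult_left_eq[OF A] by blast+
    obtain g where "x * g = x" using units \<open>x \<in> sq\<close> by blast
    then have "e * x = x" using Phi[of g] ee by (metis mult.assoc)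
    then show "x \<in> {e * f}" using Psi[of e] by simp
  qed
  have "e * f * f = e * f" "e * (e * f) = e * f" using ee ff by (metis mult.assoc)+
  then show "{e * f} \<subseteq> cls relPhi e \<inter> cls relPsi f"
    unfolding cls_def relPhi_def relPsi_def sq_def by (auto simp: mult.assoc)
qed

lemma cls_relX_inter_cls_relY:
  assumes A: "abelian_alg TYPE('a::semigroup_mult)" and "idem e" "idem (f::'a)"
  shows "cls relX e \<inter> cls relY f = cls relZ (e * f)"
proof
  have ee: "e * e = e" and ff: "f * f = f" using assms(2,3) unfolding idem_def by auto
  show "cls relX e \<inter> cls relY f \<subseteq> cls relZ (e * f)"
  proof
    fix x assume "x \<in> cls relX e \<inter> cls relY f"
    then obtain z z' where "x \<in> sq" "z * x = x" "z * e = e" "z * z = z"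
      "x * z' = x" "f * z' = f" "z' * z' = z'"
      unfolding cls_def relX_def relY_def by auto
    then have "relX x (e * f)" "relY x (e * f)"
      unfolding relX_def relY_def by (metis mult.assoc)+
    then show "x \<in> cls relZ (e * f)" unfolding cls_def relZ_def using \<open>x \<in> sq\<close> by auto
  qed
  show "cls relZ (e * f) \<subseteq> cls relX e \<inter> cls relY f"
  proof
    fix x assume "x \<in> cls relZ (e * f)"
    then obtain z z' where x: "x \<in> sq" "z * x = x" "z * (e * f) = e * f"
      "x * z' = x" "(e * f) * z' = e * f"
      unfolding cls_def relZ_def relX_def relY_def by auto
    have "z * (e * f) = e * (e * f)" using x ee by (metis mult.assoc)
    then have "e * x = x" using abelian_mult_right_eq[OF A, of z "e * f" e x] x by simp
    moreover have "(e * f) * z' = (e * f) * f" using x ff by (metis mult.assoc)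
    then have "x * f = x" using abelian_mult_left_eq[OF A, of "e * f" z' f x] x by simp
    ultimately show "x \<in> cls relX e \<inter> cls relY f"
      unfolding cls_def relX_def relY_def using x ee ff by auto
  qed
qed

theorem mainTheorem13:
  assumes "abelian_alg TYPE('a::semigroup_mult)"
      and "condStar TYPE('a)"
  shows "equiv (sq :: 'a set) (restr relX) \<and> equiv (sq :: 'a set) (restr relY)
    \<and> (\<forall>e f :: 'a. idem e \<and> idem f \<longrightarrow>
          cls relPhi e \<inter> cls relPsi f = {e * f} \<and> idem (e * f))
    \<and> (\<forall>a :: 'a. a \<in> sq \<longrightarrow>
          (\<exists>e f. idem e \<and> idem f \<and> a \<in> cls relX e \<inter> cls relY f
                 \<and> cls relX e \<inter> cls relY f = cls relZ (e * f)))"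
proof -
  note A = assms(1)
  note left_unit = sq_has_left_unit[OF assms] and right_unit = sq_has_right_unit[OF assms]
  have "\<exists>e f. idem e \<and> idem f \<and> a \<in> cls relX e \<inter> cls relY f
              \<and> cls relX e \<inter> cls relY f = cls relZ (e * f)" if "a \<in> sq" for a :: 'a
  proof -
    note a = that
    obtain e where e: "idem e" "e * a = a"
      using left_unit[OF a] abelian_idem_left_unit[OF A] by blast
    obtain f where f: "idem f" "a * f = a"
      using right_unit[OF a] abelian_idem_right_unit[OF A] by blast
    have "a \<in> cls relX e \<inter> cls relY f"
      using a e f unfolding cls_def relX_def relY_def idem_def by auto
    then show ?thesis using e(1) f(1) cls_relX_inter_cls_relY[OF A] by blast
  qed
  then show ?thesis
    using equiv_restr_relX[OF A left_unit] equiv_restr_relY[OF A right_unit]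
      cls_relPhi_inter_cls_relPsi[OF A right_unit] idem_mult_idem[OF A] by blast
qed

end
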